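(* Let $K=\mathrm{SU}(2)$, $\mathcal{M}=\{(g_1,h_1,g_2,h_2)\in K^4:[g_1,h_1][g_2,h_2]=I\}/K$ with the quotient topology, and $\mathcal{M}^\circ=\mu^{-1}(\tilde\Delta^\circ)$. Then $\mathcal{M}^\circ$ is open and dense in $\mathcal{M}$.
   Context: $[a,b]=aba^{-1}b^{-1}$; $K$ acts by simultaneous conjugation; $[g_1;h_1;g_2;h_2]$ denotes a class. For $a\in K$ let $f(a)=\frac1\pi\arccos(\mathrm{tr}(a)/2)$; $\mu([g_1;h_1;g_2;h_2])=(f(h_1),f(h_2),f(h_1h_2))$. $\tilde\Delta$ is the tetrahedron with vertices $(0,0,0),(0,1,1),(1,0,1),(1,1,0)$ and $\tilde\Delta^\circ$ its interior. *)

theory Defs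
  imports "HOL-Analysis.Analysis"
begin

type_synonym cmat = "complex^2^2"
type_synonym quad = "cmat \<times> cmat \<times> cmat \<times> cmat"

definition adj :: "cmat \<Rightarrow> cmat" where
  "adj A = (\<chi> i j. cnj (A $ j $ i))"

definition SU2 :: "cmat set" where
  "SU2 = {A. A ** adj A = mat 1 \<and> det A = 1}"

definition commutator :: "cmat \<Rightarrow> cmat \<Rightarrow> cmat" where
  "commutator a b = a ** b ** matrix_inv a ** matrix_inv b"

definition Rep :: "quad set" where
  "Rep = {(g1, h1, g2, h2). g1 \<in> SU2 \<and> h1 \<in> SU2 \<and> g2 \<in> SU2 \<and> h2 \<in> SU2 \<and>
            commutator g1 h1 ** commutator g2 h2 = mat 1}"

definition conj_act :: "cmat \<Rightarrow> quad \<Rightarrow> quad" where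
  "conj_act k = (\<lambda>(g1, h1, g2, h2).
     (k ** g1 ** matrix_inv k, k ** h1 ** matrix_inv k, k ** g2 ** matrix_inv k, k ** h2 ** matrix_inv k))"


definition cls :: "quad \<Rightarrow> quad set" where
  "cls x = (\<lambda>k. conj_act k x) ` SU2"

definition RepTop :: "quad topology" where
  "RepTop = subtopology euclidean Rep"

definition Mset :: "quad set set" where
  "Mset = cls ` Rep"

definition Mtop :: "quad set topology" where
  "Mtop = topology (\<lambda>U. U \<subseteq> Mset \<and> openin RepTop {x \<in> Rep. cls x \<in> U})"

definition f :: "cmat \<Rightarrow> real" where
  "f a = arccos (Re (trace a) / 2) / pi"

definition mu0 :: "quad \<Rightarrow> real \<times> real \<times> real" where
  "mu0 = (\<lambda>(g1, h1, g2, h2). (f h1, f h2, f (h1 ** h2)))"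

text \<open>mu on classes, evaluated at any representative (it is conjugation invariant).\<close>
definition mu :: "quad set \<Rightarrow> real \<times> real \<times> real" where
  "mu C = mu0 (SOME x. x \<in> C)"

definition tetra :: "(real \<times> real \<times> real) set" where
  "tetra = convex hull {(0,0,0), (0,1,1), (1,0,1), (1,1,0)}"

definition Mcirc :: "quad set set" where
  "Mcirc = {C \<in> Mset. mu C \<in> interior tetra}"

end

theory Submission
  imports Defs
begin

(* In quaternion coordinates write h1 = cos \<alpha> + p and h2 = cos \<beta> + q with imaginary p, q of
   lengths sin \<alpha>, sin \<beta>. The real part of h1 h2 is cos \<alpha> cos \<beta> - <p, q>, so its angle \<gamma> lies strictly
   between |\<alpha> - \<beta>| and min (\<alpha> + \<beta>, 2 pi - \<alpha> - \<beta>) as soon as p and q are not parallel, i.e. as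
   soon as h1 and h2 do not commute; these strict spherical triangle inequalities put
   mu = (\<alpha>, \<beta>, \<gamma>) / pi into the open tetrahedron. Openness follows from continuity of mu and
   of the quotient map. For density it suffices that tuples with noncommuting h1, h2 are dense in
   the representation variety. Right multiplication of h1 by an element of the centralizer of g1
   leaves [g1, h1] unchanged; moving along a curve in that centralizer first makes h1, then
   (likewise) h2 different from \<plusminus>I, and then h1 and h2 noncommuting, unless g1 and h1 commute,
   in which case conjugating the pair (g1, h1) does the job. *)

subsection \<open>SU(2) as the unit quaternions\<close>

definition quat :: "real \<Rightarrow> real \<Rightarrow> real \<Rightarrow> real \<Rightarrow> cmat" where
  "quat a b c d = (\<chi> i j. if i = 1 then (if j = 1 then Complex a b else Complex c d)
                          else (if j = 1 then Complex (-c) d else Complex a (-b)))"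

lemma quat_nth [simp]:
  "quat a b c d $ 1 $ 1 = Complex a b" "quat a b c d $ 1 $ 2 = Complex c d"
  "quat a b c d $ 2 $ 1 = Complex (-c) d" "quat a b c d $ 2 $ 2 = Complex a (-b)"
  by (simp_all add: quat_def)

lemma cmat_eq_iff: "(A::cmat) = B \<longleftrightarrow> A$1$1 = B$1$1 \<and> A$1$2 = B$1$2 \<and> A$2$1 = B$2$1 \<and> A$2$2 = B$2$2"
  by (auto simp: vec_eq_iff forall_2)

lemma cmat_mult_nth [simp]: "((A::cmat) ** B) $ i $ j = A$i$1 * B$1$j + A$i$2 * B$2$j"
  by (simp add: matrix_matrix_mult_def sum_2)

lemma adj_nth [simp]: "adj A $ i $ j = cnj (A $ j $ i)"
  by (simp add: adj_def)

lemma quat_mult: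
  "quat a b c d ** quat a' b' c' d' =
     quat (a*a' - b*b' - c*c' - d*d') (a*b' + b*a' + c*d' - d*c')
          (a*c' - b*d' + c*a' + d*b') (a*d' + b*c' - c*b' + d*a')"
  by (simp add: cmat_eq_iff complex_eq_iff algebra_simps)

lemma quat_eq_iff: "quat a b c d = quat a' b' c' d' \<longleftrightarrow> a = a' \<and> b = b' \<and> c = c' \<and> d = d'"
  by (auto simp: cmat_eq_iff complex_eq_iff)

lemma adj_quat: "adj (quat a b c d) = quat a (-b) (-c) (-d)"
  by (simp add: cmat_eq_iff complex_eq_iff)

lemma mat_1_quat: "mat 1 = quat 1 0 0 0"
  by (simp add: cmat_eq_iff mat_def complex_eq_iff)

lemma det_quat: "det (quat a b c d) = complex_of_real (a\<^sup>2 + b\<^sup>2 + c\<^sup>2 + d\<^sup>2)"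
  by (simp add: det_2 complex_eq_iff power2_eq_square)

lemma quat_commute_iff:
  "quat a b c d ** quat a' b' c' d' = quat a' b' c' d' ** quat a b c d \<longleftrightarrow>
     c*d' = d*c' \<and> d*b' = b*d' \<and> b*c' = c*b'"
  by (auto simp: quat_mult quat_eq_iff algebra_simps)

lemma quat_in_SU2: "a\<^sup>2 + b\<^sup>2 + c\<^sup>2 + d\<^sup>2 = 1 \<Longrightarrow> quat a b c d \<in> SU2"
  unfolding SU2_def
  by (simp add: adj_quat quat_mult mat_1_quat det_quat quat_eq_iff power2_eq_square algebra_simps)

lemma SU2_eq_quat:
  assumes "A \<in> SU2"
  shows "A = quat (Re (A$1$1)) (Im (A$1$1)) (Re (A$1$2)) (Im (A$1$2))"
    and "(Re (A$1$1))\<^sup>2 + (Im (A$1$1))\<^sup>2 + (Re (A$1$2))\<^sup>2 + (Im (A$1$2))\<^sup>2 = 1"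
proof -
  define p q r w where "p = A$1$1" and "q = A$1$2" and "r = A$2$1" and "w = A$2$2"
  have "A ** adj A = mat 1" "det A = 1"
    using assms unfolding SU2_def by auto
  then have e1: "p * cnj p + q * cnj q = 1" and e3: "r * cnj p + w * cnj q = 0"
    and d: "p * w - q * r = 1"
    unfolding p_def q_def r_def w_def by (auto simp: cmat_eq_iff mat_def det_2)
  have "w - cnj p = w * (p * cnj p + q * cnj q) - cnj p * (p * w - q * r)"
    using e1 d by simp
  also have "\<dots> = q * (r * cnj p + w * cnj q)"
    by (simp add: algebra_simps)
  finally have w: "w = cnj p"
    using e3 by simp
  have "r + cnj q = r * (p * cnj p + q * cnj q) + cnj q * (p * w - q * r)"
    using e1 d by simp
  also have "\<dots> = p * (r * cnj p + w * cnj q)"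
    by (simp add: algebra_simps)
  finally have r: "r = - cnj q"
    using e3 by (simp add: add_eq_0_iff)
  show "A = quat (Re (A$1$1)) (Im (A$1$1)) (Re (A$1$2)) (Im (A$1$2))"
    using w r unfolding p_def q_def r_def w_def by (simp add: cmat_eq_iff complex_eq_iff)
  show "(Re (A$1$1))\<^sup>2 + (Im (A$1$1))\<^sup>2 + (Re (A$1$2))\<^sup>2 + (Im (A$1$2))\<^sup>2 = 1"
    using arg_cong[OF e1, of Re] unfolding p_def q_def by (simp add: power2_eq_square)
qed

lemma SU2_iff_quat: "A \<in> SU2 \<longleftrightarrow> (\<exists>a b c d. A = quat a b c d \<and> a\<^sup>2 + b\<^sup>2 + c\<^sup>2 + d\<^sup>2 = 1)"
  using SU2_eq_quat quat_in_SU2 by metis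

lemma adj_mult: "adj ((A::cmat) ** B) = adj B ** adj A"
  by (simp add: cmat_eq_iff algebra_simps)

lemma adj_mat_1: "adj (mat 1) = mat 1"
  by (simp add: mat_1_quat adj_quat)

lemma SU2_mult_adj_right: "A \<in> SU2 \<Longrightarrow> A ** adj A = mat 1"
  unfolding SU2_def by auto

lemma SU2_mult_adj_left: "A \<in> SU2 \<Longrightarrow> adj A ** A = mat 1"
  using SU2_mult_adj_right matrix_left_right_inverse by blast

lemma matrix_inv_SU2:
  assumes "A \<in> SU2"
  shows "matrix_inv A = adj A"
proof -
  have "\<exists>B. A ** B = mat 1 \<and> B ** A = mat 1"
    using SU2_mult_adj_right[OF assms] SU2_mult_adj_left[OF assms] by blast
  then have "A ** matrix_inv A = mat 1 \<and> matrix_inv A ** A = mat 1"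
    unfolding matrix_inv_def by (rule someI_ex)
  then have "matrix_inv A = matrix_inv A ** (A ** adj A)"
    using SU2_mult_adj_right[OF assms] by simp
  also have "\<dots> = adj A"
    using \<open>A ** matrix_inv A = mat 1 \<and> matrix_inv A ** A = mat 1\<close> by (simp add: matrix_mul_assoc)
  finally show ?thesis .
qed

lemma SU2_mult:
  assumes "A \<in> SU2" and "B \<in> SU2"
  shows "A ** B \<in> SU2"
proof -
  have "(A ** B) ** adj (A ** B) = A ** (B ** adj B) ** adj A"
    by (simp add: adj_mult matrix_mul_assoc)
  also have "\<dots> = mat 1"
    using SU2_mult_adj_right[OF assms(1)] SU2_mult_adj_right[OF assms(2)] by simp
  finally show ?thesis
    using assms unfolding SU2_def by (auto simp: det_mul)
qed

lemma SU2_adj: "A \<in> SU2 \<Longrightarrow> adj A \<in> SU2"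
  by (auto simp: SU2_iff_quat adj_quat quat_eq_iff)

lemma mat_1_in_SU2: "mat 1 \<in> SU2"
  unfolding mat_1_quat by (rule quat_in_SU2) simp

lemma commutator_SU2: "a \<in> SU2 \<Longrightarrow> b \<in> SU2 \<Longrightarrow> commutator a b = a ** b ** adj a ** adj b"
  by (simp add: commutator_def matrix_inv_SU2)

lemma commutator_commuting:
  assumes "a \<in> SU2" and "b \<in> SU2" and "a ** b = b ** a"
  shows "commutator a b = mat 1"
proof -
  have "commutator a b = (a ** b) ** adj a ** adj b"
    using assms by (simp add: commutator_SU2)
  also have "\<dots> = b ** (a ** adj a) ** adj b"
    using assms(3) by (simp add: matrix_mul_assoc)
  also have "\<dots> = mat 1"
    using SU2_mult_adj_right[OF assms(1)] SU2_mult_adj_right[OF assms(2)] by simp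
  finally show ?thesis .
qed

lemma commutator_mult_right_centralizer:
  assumes g: "g \<in> SU2" and h: "h \<in> SU2" and z: "z \<in> SU2" and gz: "z ** g = g ** z"
  shows "commutator g (h ** z) = commutator g h"
proof -
  have "adj g ** (z ** g) ** adj g = adj g ** (g ** z) ** adj g"
    using gz by simp
  then have "adj g ** z ** (g ** adj g) = (adj g ** g) ** z ** adj g"
    by (simp add: matrix_mul_assoc)
  then have z_adj_g: "z ** adj g = adj g ** z"
    using SU2_mult_adj_right[OF g] SU2_mult_adj_left[OF g] by simp
  have "commutator g (h ** z) = g ** h ** (z ** adj g) ** adj z ** adj h"
    using g h z by (simp add: commutator_SU2 SU2_mult adj_mult matrix_mul_assoc)
  also have "\<dots> = g ** h ** adj g ** (z ** adj z) ** adj h"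
    using z_adj_g by (simp add: matrix_mul_assoc)
  also have "\<dots> = commutator g h"
    using SU2_mult_adj_right[OF z] g h by (simp add: commutator_SU2)
  finally show ?thesis .
qed

lemma conj_SU2_mult:
  "k \<in> SU2 \<Longrightarrow> (k ** A ** adj k) ** (k ** B ** adj k) = k ** (A ** B) ** adj k"
  by (metis SU2_mult_adj_left matrix_mul_assoc matrix_mul_rid)

lemma f_conj_SU2:
  assumes "k \<in> SU2"
  shows "f (k ** A ** adj k) = f A"
proof -
  have "trace (k ** A ** adj k) = trace (adj k ** (k ** A))"
    by (rule trace_mul_sym)
  also have "\<dots> = trace A"
    using SU2_mult_adj_left[OF assms] by (simp add: matrix_mul_assoc)
  finally show ?thesis
    by (simp add: f_def)
qed

lemma f_quat: "f (quat a b c d) = arccos a / pi"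
  by (simp add: f_def trace_def sum_2)

text \<open>On SU(2) this says A \<noteq> \<plusminus>I.\<close>

definition noncentral :: "cmat \<Rightarrow> bool" where
  "noncentral A \<longleftrightarrow> Im (A$1$1) \<noteq> 0 \<or> A$1$2 \<noteq> 0"

lemma noncentral_quat: "noncentral (quat a b c d) \<longleftrightarrow> b \<noteq> 0 \<or> c \<noteq> 0 \<or> d \<noteq> 0"
  by (auto simp: noncentral_def complex_eq_iff)

lemma cross_eq_0_trans:
  fixes h1 h2 h3 x1 x2 x3 y1 y2 y3 :: real
  assumes "h1 \<noteq> 0 \<or> h2 \<noteq> 0 \<or> h3 \<noteq> 0"
    and "h2*x3 = h3*x2" "h3*x1 = h1*x3" "h1*x2 = h2*x1"
    and "h2*y3 = h3*y2" "h3*y1 = h1*y3" "h1*y2 = h2*y1"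
  shows "x2*y3 = x3*y2 \<and> x3*y1 = x1*y3 \<and> x1*y2 = x2*y1"
proof -
  have "h1*(x2*y3 - x3*y2) = 0" "h2*(x2*y3 - x3*y2) = 0" "h3*(x2*y3 - x3*y2) = 0"
    "h1*(x3*y1 - x1*y3) = 0" "h2*(x3*y1 - x1*y3) = 0" "h3*(x3*y1 - x1*y3) = 0"
    "h1*(x1*y2 - x2*y1) = 0" "h2*(x1*y2 - x2*y1) = 0" "h3*(x1*y2 - x2*y1) = 0"
    using assms(2-7) by algebra+
  then show ?thesis
    using assms(1) by auto
qed

lemma commute_trans_noncentral:
  assumes "h \<in> SU2" "x \<in> SU2" "y \<in> SU2" "noncentral h"
    and "x ** h = h ** x" "y ** h = h ** y"
  shows "x ** y = y ** x"
proof -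
  obtain h0 h1 h2 h3 where h: "h = quat h0 h1 h2 h3"
    using assms SU2_iff_quat by blast
  obtain x0 x1 x2 x3 where x: "x = quat x0 x1 x2 x3"
    using assms SU2_iff_quat by blast
  obtain y0 y1 y2 y3 where y: "y = quat y0 y1 y2 y3"
    using assms SU2_iff_quat by blast
  have "h1 \<noteq> 0 \<or> h2 \<noteq> 0 \<or> h3 \<noteq> 0"
    using assms(4) h noncentral_quat by simp
  moreover have "h2*x3 = h3*x2" "h3*x1 = h1*x3" "h1*x2 = h2*x1"
    using assms(5) unfolding h x by (simp_all add: quat_commute_iff) (metis mult.commute)+
  moreover have "h2*y3 = h3*y2" "h3*y1 = h1*y3" "h1*y2 = h2*y1"
    using assms(6) unfolding h y by (simp_all add: quat_commute_iff) (metis mult.commute)+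
  ultimately have "x2*y3 = x3*y2 \<and> x3*y1 = x1*y3 \<and> x1*y2 = x2*y1"
    by (rule cross_eq_0_trans)
  then show ?thesis
    unfolding x y quat_commute_iff by simp
qed

lemma noncentral_mult_central_left:
  assumes "A \<in> SU2" "\<not> noncentral A" "B \<in> SU2" "noncentral B"
  shows "noncentral (A ** B)"
proof -
  obtain a b c d where A: "A = quat a b c d" "a\<^sup>2 + b\<^sup>2 + c\<^sup>2 + d\<^sup>2 = 1"
    using assms SU2_iff_quat by blast
  then have "b = 0" "c = 0" "d = 0" "a \<noteq> 0"
    using assms(2) noncentral_quat by auto
  moreover obtain a' b' c' d' where "B = quat a' b' c' d'"
    using assms SU2_iff_quat by blast
  ultimately show ?thesis
    using assms(4) unfolding A by (simp add: quat_mult noncentral_quat)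
qed

subsection \<open>The image of mu\<close>

lemma in_tetra_if_triangle_ineqs:
  fixes a b c :: real
  assumes "a \<le> b + c" "b \<le> a + c" "c \<le> a + b" "a + b + c \<le> 2"
  shows "(a, b, c) \<in> tetra"
proof -
  let ?V = "{(0,0,0), (0,1,1), (1,0,1), (1,1,0)} :: (real \<times> real \<times> real) set"
  define u where "u = (\<lambda>v::real \<times> real \<times> real.
    if v = (0,1,1) then (b + c - a) / 2 else if v = (1,0,1) then (a + c - b) / 2
    else if v = (1,1,0) then (a + b - c) / 2 else 1 - (a + b + c) / 2)"
  have "(\<forall>v\<in>?V. 0 \<le> u v) \<and> sum u ?V = 1 \<and> (\<Sum>v\<in>?V. u v *\<^sub>R v) = (a, b, c)"
    using assms unfolding u_def by (auto simp: field_simps)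
  then show ?thesis
    unfolding tetra_def by (subst convex_hull_finite) auto
qed

lemma in_interior_tetra_if_strict_triangle_ineqs:
  fixes a b c :: real
  assumes "a < b + c" "b < a + c" "c < a + b" "a + b + c < 2"
  shows "(a, b, c) \<in> interior tetra"
proof -
  define S where "S = {x :: real \<times> real \<times> real. fst x < fst (snd x) + snd (snd x) \<and>
    fst (snd x) < fst x + snd (snd x) \<and> snd (snd x) < fst x + fst (snd x) \<and>
    fst x + fst (snd x) + snd (snd x) < 2}"
  have "open S"
    unfolding S_def by (intro open_Collect_conj open_Collect_less continuous_intros)
  moreover have "S \<subseteq> tetra"
  proof
    fix x assume "x \<in> S"
    then show "x \<in> tetra"
      using in_tetra_if_triangle_ineqs[of "fst x" "fst (snd x)" "snd (snd x)"] unfolding S_def by simp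
  qed
  moreover have "(a, b, c) \<in> S"
    using assms unfolding S_def by simp
  ultimately show ?thesis
    using interior_maximal by blast
qed

lemma arccos_strict_spherical_triangle:
  fixes \<alpha> \<beta> r :: real
  assumes "0 \<le> \<alpha>" "\<alpha> \<le> pi" "0 \<le> \<beta>" "\<beta> \<le> pi"
    and sum: "cos (\<alpha> + \<beta>) < r" and diff: "r < cos (\<alpha> - \<beta>)"
  shows "\<bar>\<alpha> - \<beta>\<bar> < arccos r" and "arccos r < \<alpha> + \<beta>" and "arccos r < 2*pi - (\<alpha> + \<beta>)"
proof -
  have "-1 \<le> r" "r \<le> 1"
    using sum diff cos_ge_minus_one[of "\<alpha> + \<beta>"] cos_le_one[of "\<alpha> - \<beta>"] by linarith+
  then have \<gamma>: "0 \<le> arccos r" "arccos r \<le> pi" "cos (arccos r) = r"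
    using arccos_bounded by auto
  have "cos (\<beta> - \<alpha>) = cos (\<alpha> - \<beta>)"
    by (metis cos_minus minus_diff_eq)
  then have "cos (arccos r) < cos \<bar>\<alpha> - \<beta>\<bar>"
    using diff \<gamma>(3) by (simp add: abs_real_def)
  then show "\<bar>\<alpha> - \<beta>\<bar> < arccos r"
    using \<gamma> assms by (subst (asm) cos_mono_less_eq) auto
  have "cos (\<alpha> + \<beta>) = cos (2*pi - (\<alpha> + \<beta>))"
    by (simp add: cos_diff)
  then have "arccos r < \<alpha> + \<beta> \<and> arccos r < 2*pi - (\<alpha> + \<beta>)"
    using sum \<gamma> assms cos_mono_less_eq[of "\<alpha> + \<beta>" "arccos r"]
      cos_mono_less_eq[of "2*pi - (\<alpha> + \<beta>)" "arccos r"]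
    by (cases "\<alpha> + \<beta> \<le> pi") auto
  then show "arccos r < \<alpha> + \<beta>" "arccos r < 2*pi - (\<alpha> + \<beta>)"
    by auto
qed

lemma arccos_triple_in_interior_tetra:
  fixes a b s :: real
  assumes "a\<^sup>2 \<le> 1" and "b\<^sup>2 \<le> 1" and "s\<^sup>2 < (1 - a\<^sup>2) * (1 - b\<^sup>2)"
  shows "(arccos a / pi, arccos b / pi, arccos (a*b - s) / pi) \<in> interior tetra"
proof -
  have "-1 \<le> a" "a \<le> 1" "-1 \<le> b" "b \<le> 1"
    using assms(1,2) abs_square_le_1 by (auto simp: abs_le_iff)
  then have \<alpha>: "0 \<le> arccos a" "arccos a \<le> pi" "cos (arccos a) = a" "sin (arccos a) = sqrt (1 - a\<^sup>2)"
    and \<beta>: "0 \<le> arccos b" "arccos b \<le> pi" "cos (arccos b) = b" "sin (arccos b) = sqrt (1 - b\<^sup>2)"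
    using arccos_bounded sin_arccos by auto
  have "\<bar>s\<bar> < sqrt ((1 - a\<^sup>2) * (1 - b\<^sup>2))"
    using assms(3) real_sqrt_less_mono[of "s\<^sup>2"] by simp
  then have "\<bar>s\<bar> < sin (arccos a) * sin (arccos b)"
    using \<alpha>(4) \<beta>(4) by (simp add: real_sqrt_mult)
  then have "cos (arccos a + arccos b) < a*b - s" "a*b - s < cos (arccos a - arccos b)"
    using \<alpha>(3) \<beta>(3) by (auto simp: cos_add cos_diff)
  from arccos_strict_spherical_triangle[OF \<alpha>(1,2) \<beta>(1,2) this]
  show ?thesis
    by (intro in_interior_tetra_if_strict_triangle_ineqs)
       (auto simp: divide_simps abs_real_def split: if_splits)
qed

lemma mu0_in_interior_tetra_if_not_commute:
  assumes "h1 \<in> SU2" "h2 \<in> SU2" "h1 ** h2 \<noteq> h2 ** h1"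
  shows "mu0 (g1, h1, g2, h2) \<in> interior tetra"
proof -
  obtain a b c d where h1: "h1 = quat a b c d" "a\<^sup>2 + b\<^sup>2 + c\<^sup>2 + d\<^sup>2 = 1"
    using assms SU2_iff_quat by blast
  obtain a' b' c' d' where h2: "h2 = quat a' b' c' d'" "a'\<^sup>2 + b'\<^sup>2 + c'\<^sup>2 + d'\<^sup>2 = 1"
    using assms SU2_iff_quat by blast
  define s where "s = b*b' + c*c' + d*d'"
  have "\<not> (c*d' = d*c' \<and> d*b' = b*d' \<and> b*c' = c*b')"
    using assms(3) h1 h2 quat_commute_iff by simp
  then have "0 < (c*d' - d*c')\<^sup>2 + (d*b' - b*d')\<^sup>2 + (b*c' - c*b')\<^sup>2"
    by (smt (verit, best) power2_less_eq_zero_iff right_minus_eq zero_le_power2)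
  also have "\<dots> = (b\<^sup>2 + c\<^sup>2 + d\<^sup>2) * (b'\<^sup>2 + c'\<^sup>2 + d'\<^sup>2) - s\<^sup>2"
    unfolding s_def by (simp add: power2_eq_square algebra_simps)
  also have "\<dots> = (1 - a\<^sup>2) * (1 - a'\<^sup>2) - s\<^sup>2"
  proof -
    have "1 - a\<^sup>2 = b\<^sup>2 + c\<^sup>2 + d\<^sup>2" "1 - a'\<^sup>2 = b'\<^sup>2 + c'\<^sup>2 + d'\<^sup>2"
      using h1(2) h2(2) by simp_all
    then show ?thesis
      by simp
  qed
  finally have "s\<^sup>2 < (1 - a\<^sup>2) * (1 - a'\<^sup>2)"
    by simp
  moreover have "a\<^sup>2 \<le> 1" "a'\<^sup>2 \<le> 1"
    using h1(2) h2(2) by (smt (verit) zero_le_power2)+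
  ultimately have "(arccos a / pi, arccos a' / pi, arccos (a*a' - s) / pi) \<in> interior tetra"
    by (intro arccos_triple_in_interior_tetra)
  then show ?thesis
    unfolding mu0_def h1 h2 by (simp add: quat_mult f_quat s_def algebra_simps)
qed

subsection \<open>Continuity and the quotient topology\<close>

lemma continuous_on_cmat_mult [continuous_intros]:
  fixes F G :: "'a::topological_space \<Rightarrow> cmat"
  assumes "continuous_on S F" "continuous_on S G"
  shows "continuous_on S (\<lambda>x. F x ** G x)"
proof -
  have "(\<lambda>x. F x ** G x) = (\<lambda>x. \<chi> i j. F x $ i $ 1 * G x $ 1 $ j + F x $ i $ 2 * G x $ 2 $ j)"
    by (intro ext) (simp add: vec_eq_iff)
  then show ?thesis
    by (simp only:) (intro continuous_intros assms)
qed

lemma continuous_on_adj [continuous_intros]: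
  fixes F :: "'a::topological_space \<Rightarrow> cmat"
  assumes "continuous_on S F"
  shows "continuous_on S (\<lambda>x. adj (F x))"
  unfolding adj_def by (intro continuous_intros assms)

lemma continuous_on_quat [continuous_intros]:
  fixes a b c d :: "'a::topological_space \<Rightarrow> real"
  assumes "continuous_on S a" "continuous_on S b" "continuous_on S c" "continuous_on S d"
  shows "continuous_on S (\<lambda>x. quat (a x) (b x) (c x) (d x))"
proof -
  have Complex_eq: "Complex x y = complex_of_real x + \<i> * complex_of_real y" for x y
    by (simp add: complex_eq_iff)
  show ?thesis
    unfolding quat_def Complex_eq
  proof (intro continuous_on_vec_lambda)
    fix i j :: 2
    show "continuous_on S (\<lambda>x. (if i = 1 then if j = 1 then of_real (a x) + \<i> * of_real (b x)
      else of_real (c x) + \<i> * of_real (d x) else if j = 1 then of_real (- c x) + \<i> * of_real (d x)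
      else of_real (a x) + \<i> * of_real (- b x)))"
      by (cases "i = 1"; cases "j = 1") (auto intro!: continuous_intros assms)
  qed
qed

lemma continuous_on_f_SU2: "continuous_on SU2 f"
proof -
  have f_eq: "f = (\<lambda>A. arccos ((Re (A$1$1) + Re (A$2$2)) / 2) / pi)"
    by (auto simp: f_def trace_def sum_2)
  have "-2 \<le> Re (A$1$1) + Re (A$2$2) \<and> Re (A$1$1) + Re (A$2$2) \<le> 2" if A: "A \<in> SU2" for A
  proof -
    obtain a b c d where "A = quat a b c d" "a\<^sup>2 + b\<^sup>2 + c\<^sup>2 + d\<^sup>2 = 1"
      using A SU2_iff_quat by blast
    moreover from this(2) have "a\<^sup>2 \<le> 1"
      by (smt (verit) zero_le_power2)
    ultimately show ?thesis
      using abs_square_le_1 by (auto simp: abs_le_iff)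
  qed
  then show ?thesis
    unfolding f_eq
    by (intro continuous_intros continuous_on_compose2[OF continuous_on_arccos']) auto
qed

lemma continuous_on_mu0: "continuous_on Rep mu0"
proof -
  have mu0_eq: "mu0 = (\<lambda>x. (f (fst (snd x)), f (snd (snd (snd x))), f (fst (snd x) ** snd (snd (snd x)))))"
    unfolding mu0_def by auto
  have "fst (snd x) \<in> SU2" "snd (snd (snd x)) \<in> SU2" "fst (snd x) ** snd (snd (snd x)) \<in> SU2"
    if "x \<in> Rep" for x
    using that unfolding Rep_def by (auto intro: SU2_mult)
  then show ?thesis
    unfolding mu0_eq by (intro continuous_intros continuous_on_compose2[OF continuous_on_f_SU2]) auto
qed

lemma mu_cls: "mu (cls x) = mu0 x"
proof -
  have "\<exists>y. y \<in> cls x"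
    using mat_1_in_SU2 unfolding cls_def by blast
  then have "(SOME y. y \<in> cls x) \<in> cls x"
    by (rule someI_ex)
  then obtain k where k: "k \<in> SU2" "(SOME y. y \<in> cls x) = conj_act k x"
    unfolding cls_def by auto
  obtain g1 h1 g2 h2 where "x = (g1, h1, g2, h2)"
    by (cases x)
  then show ?thesis
    using k unfolding mu_def conj_act_def mu0_def
    by (simp add: matrix_inv_SU2 f_conj_SU2 conj_SU2_mult)
qed

lemma openin_Mtop: "openin Mtop U \<longleftrightarrow> U \<subseteq> Mset \<and> openin RepTop {x \<in> Rep. cls x \<in> U}"
proof -
  have "istopology (\<lambda>U. U \<subseteq> Mset \<and> openin RepTop {x \<in> Rep. cls x \<in> U})"
    unfolding istopology_def
  proof (rule conjI; intro allI impI)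
    fix S T :: "quad set set"
    assume "S \<subseteq> Mset \<and> openin RepTop {x \<in> Rep. cls x \<in> S}"
      and "T \<subseteq> Mset \<and> openin RepTop {x \<in> Rep. cls x \<in> T}"
    moreover have "{x \<in> Rep. cls x \<in> S \<inter> T} = {x \<in> Rep. cls x \<in> S} \<inter> {x \<in> Rep. cls x \<in> T}"
      by auto
    ultimately show "S \<inter> T \<subseteq> Mset \<and> openin RepTop {x \<in> Rep. cls x \<in> S \<inter> T}"
      by auto
  next
    fix \<U> :: "quad set set set"
    assume "\<forall>S\<in>\<U>. S \<subseteq> Mset \<and> openin RepTop {x \<in> Rep. cls x \<in> S}"
    moreover have "{x \<in> Rep. cls x \<in> \<Union>\<U>} = (\<Union>S\<in>\<U>. {x \<in> Rep. cls x \<in> S})"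
      by auto
    ultimately show "\<Union>\<U> \<subseteq> Mset \<and> openin RepTop {x \<in> Rep. cls x \<in> \<Union>\<U>}"
      by (auto intro!: openin_Union)
  qed
  then show ?thesis
    unfolding Mtop_def by simp
qed

lemma topspace_Mtop: "topspace Mtop = Mset"
proof -
  have "{x \<in> Rep. cls x \<in> Mset} = Rep"
    unfolding Mset_def by auto
  then have "openin Mtop Mset"
    unfolding openin_Mtop RepTop_def by auto
  then show ?thesis
    using openin_subset unfolding topspace_def openin_Mtop by blast
qed

lemma continuous_map_cls: "continuous_map RepTop Mtop cls"
  unfolding continuous_map
proof
  show "cls ` topspace RepTop \<subseteq> topspace Mtop"
    by (auto simp: RepTop_def topspace_Mtop Mset_def)
  show "\<forall>U. openin Mtop U \<longrightarrow> openin RepTop {x \<in> topspace RepTop. cls x \<in> U}"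
    by (simp add: openin_Mtop RepTop_def)
qed

lemma Mtop_closure_of_cls_dense:
  assumes "D \<subseteq> Rep" and "Rep \<subseteq> closure D"
  shows "Mtop closure_of (cls ` D) = topspace Mtop"
proof (rule subset_antisym[OF closure_of_subset_topspace])
  have "RepTop closure_of D = Rep \<inter> closure D"
    unfolding RepTop_def using assms(1) closure_of_subtopology_open[of euclidean Rep D] by simp
  then have "topspace Mtop = cls ` (RepTop closure_of D)"
    using assms(2) by (simp add: topspace_Mtop Mset_def Int_absorb2)
  also have "\<dots> \<subseteq> Mtop closure_of (cls ` D)"
    by (rule continuous_map_image_closure_subset[OF continuous_map_cls])
  finally show "topspace Mtop \<subseteq> Mtop closure_of (cls ` D)" .
qed

subsection \<open>Density of noncommuting h1, h2\<close>

lemma Rep_iff: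
  "(g1, h1, g2, h2) \<in> Rep \<longleftrightarrow> g1 \<in> SU2 \<and> h1 \<in> SU2 \<and> g2 \<in> SU2 \<and> h2 \<in> SU2 \<and>
     commutator g1 h1 ** commutator g2 h2 = mat 1"
  unfolding Rep_def by simp

lemma Rep_mult_h1_centralizer:
  assumes "(g1, h1, g2, h2) \<in> Rep" "z \<in> SU2" "z ** g1 = g1 ** z"
  shows "(g1, h1 ** z, g2, h2) \<in> Rep"
  using assms commutator_mult_right_centralizer[of g1 h1 z] by (auto simp: Rep_iff SU2_mult)

lemma Rep_mult_h2_centralizer:
  assumes "(g1, h1, g2, h2) \<in> Rep" "z \<in> SU2" "z ** g2 = g2 ** z"
  shows "(g1, h1, g2, h2 ** z) \<in> Rep"
  using assms commutator_mult_right_centralizer[of g2 h2 z] by (auto simp: Rep_iff SU2_mult)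

lemma in_closure_if_curve:
  fixes \<gamma> :: "real \<Rightarrow> 'a::topological_space"
  assumes "continuous_on UNIV \<gamma>" and "0 < e" and "\<And>t. 0 < t \<Longrightarrow> t < e \<Longrightarrow> \<gamma> t \<in> B"
  shows "\<gamma> 0 \<in> closure B"
proof (rule Lim_in_closed_set[OF closed_closure])
  show "\<forall>\<^sub>F t in at_right 0. \<gamma> t \<in> closure B"
    using assms(2,3) closure_subset by (auto simp: eventually_at_right[OF \<open>0 < e\<close>])
  have "isCont \<gamma> 0"
    using assms(1) by (simp add: continuous_on_eq_continuous_at)
  then show "(\<gamma> \<longlongrightarrow> \<gamma> 0) (at_right 0)"
    unfolding isCont_def by (rule filterlim_at_split[THEN iffD1, THEN conjunct2])
qed simp

text \<open>A one-parameter subgroup through g; if g = \<plusminus>I any other one will do.\<close>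

lemma centralizer_curve:
  assumes "g \<in> SU2"
  obtains z :: "real \<Rightarrow> cmat" where "continuous_on UNIV z" "z 0 = mat 1"
    "\<And>t. z t \<in> SU2" "\<And>t. z t ** g = g ** z t" "\<And>t. sin t \<noteq> 0 \<Longrightarrow> noncentral (z t)"
proof -
  obtain a b c d where g: "g = quat a b c d"
    using assms SU2_iff_quat by blast
  show ?thesis
  proof (cases "b = 0 \<and> c = 0 \<and> d = 0")
    case True
    show ?thesis
      by (rule that[of "\<lambda>t. quat (cos t) (sin t) 0 0"])
         (use True in \<open>auto intro!: continuous_intros quat_in_SU2 simp: mat_1_quat g quat_commute_iff noncentral_quat\<close>)
  next
    case False
    define r where "r = sqrt (b\<^sup>2 + c\<^sup>2 + d\<^sup>2)"
    have "r \<noteq> 0"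
      using False unfolding r_def by (auto simp: sum_power2_eq_zero_iff add_nonneg_eq_0_iff)
    have unit: "(cos t)\<^sup>2 + (sin t * b / r)\<^sup>2 + (sin t * c / r)\<^sup>2 + (sin t * d / r)\<^sup>2 = 1" for t
    proof -
      have "(sin t * b / r)\<^sup>2 + (sin t * c / r)\<^sup>2 + (sin t * d / r)\<^sup>2 = (sin t)\<^sup>2 * ((b\<^sup>2 + c\<^sup>2 + d\<^sup>2) / r\<^sup>2)"
        by (simp add: power_divide power_mult_distrib algebra_simps add_divide_distrib)
      also have "\<dots> = (sin t)\<^sup>2"
        using \<open>r \<noteq> 0\<close> unfolding r_def by simp
      finally show ?thesis
        using sin_cos_squared_add2[of t] by linarith
    qed
    show ?thesis
      by (rule that[of "\<lambda>t. quat (cos t) (sin t * b / r) (sin t * c / r) (sin t * d / r)"])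
         (use False \<open>r \<noteq> 0\<close> in \<open>auto intro!: continuous_intros quat_in_SU2 unit
           simp: mat_1_quat g quat_commute_iff noncentral_quat\<close>)
  qed
qed

lemma conjugation_curve:
  assumes "h \<in> SU2" "noncentral h"
  obtains k :: "real \<Rightarrow> cmat" where "continuous_on UNIV k" "k 0 = mat 1" "\<And>t. k t \<in> SU2"
    "\<And>t. sin t \<noteq> 0 \<Longrightarrow> cos t \<noteq> 0 \<Longrightarrow>
       (k t ** h ** adj (k t)) ** h \<noteq> h ** (k t ** h ** adj (k t))"
proof -
  obtain a b c d where h: "h = quat a b c d"
    using assms SU2_iff_quat by blast
  consider "c \<noteq> 0 \<or> d \<noteq> 0" | "c = 0" "d = 0" "b \<noteq> 0"
    using assms(2) h noncentral_quat by auto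
  then show ?thesis
  proof cases
    case 1
    define k where "k t = quat (cos t) (sin t) 0 0" for t
    have "(k t ** h ** adj (k t)) ** h \<noteq> h ** (k t ** h ** adj (k t))"
      if "sin t \<noteq> 0" "cos t \<noteq> 0" for t
    proof
      assume "(k t ** h ** adj (k t)) ** h = h ** (k t ** h ** adj (k t))"
      then have "2 * cos t * sin t * (c\<^sup>2 + d\<^sup>2) = 0"
        unfolding k_def h adj_quat quat_mult quat_eq_iff by algebra
      then show False
        using that 1 by (simp add: sum_power2_eq_zero_iff)
    qed
    then show ?thesis
      by (intro that[of k]) (auto intro!: continuous_intros quat_in_SU2 simp: k_def mat_1_quat)
  next
    case 2
    define k where "k t = quat (cos t) 0 (sin t) 0" for t
    have "(k t ** h ** adj (k t)) ** h \<noteq> h ** (k t ** h ** adj (k t))"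
      if "sin t \<noteq> 0" "cos t \<noteq> 0" for t
    proof
      assume "(k t ** h ** adj (k t)) ** h = h ** (k t ** h ** adj (k t))"
      then have "cos t * sin t * b * b = 0"
        using 2 unfolding k_def h adj_quat quat_mult quat_eq_iff by algebra
      then show False
        using that 2 by simp
    qed
    then show ?thesis
      by (intro that[of k]) (auto intro!: continuous_intros quat_in_SU2 simp: k_def mat_1_quat)
  qed
qed

definition Rep_h1_noncentral :: "quad set" where
  "Rep_h1_noncentral = {(g1, h1, g2, h2). (g1, h1, g2, h2) \<in> Rep \<and> noncentral h1}"

definition Rep_h_noncentral :: "quad set" where
  "Rep_h_noncentral = {(g1, h1, g2, h2). (g1, h1, g2, h2) \<in> Rep \<and> noncentral h1 \<and> noncentral h2}"

definition Rep_h_noncommuting :: "quad set" where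
  "Rep_h_noncommuting = {(g1, h1, g2, h2). (g1, h1, g2, h2) \<in> Rep \<and> h1 ** h2 \<noteq> h2 ** h1}"

lemma Rep_subset_closure_Rep_h1_noncentral: "Rep \<subseteq> closure Rep_h1_noncentral"
proof
  fix x assume "x \<in> Rep"
  then obtain g1 h1 g2 h2 where x: "x = (g1, h1, g2, h2)" and R: "(g1, h1, g2, h2) \<in> Rep"
    by (cases x) auto
  then have g1: "g1 \<in> SU2" and h1: "h1 \<in> SU2"
    by (auto simp: Rep_iff)
  show "x \<in> closure Rep_h1_noncentral"
  proof (cases "noncentral h1")
    case True
    then have "x \<in> Rep_h1_noncentral"
      using R unfolding x Rep_h1_noncentral_def by simp
    then show ?thesis
      by (rule closure_subset[THEN subsetD])
  next
    case False
    obtain z :: "real \<Rightarrow> cmat" where z: "continuous_on UNIV z" "z 0 = mat 1" "\<And>t. z t \<in> SU2"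
      "\<And>t. z t ** g1 = g1 ** z t" "\<And>t. sin t \<noteq> 0 \<Longrightarrow> noncentral (z t)"
      by (fact centralizer_curve[OF g1])
    have "(\<lambda>t. (g1, h1 ** z t, g2, h2)) 0 \<in> closure Rep_h1_noncentral"
    proof (rule in_closure_if_curve)
      show "continuous_on UNIV (\<lambda>t. (g1, h1 ** z t, g2, h2))"
        by (intro continuous_intros z(1))
      fix t :: real assume "0 < t" "t < pi"
      then have "sin t \<noteq> 0"
        using sin_gt_zero by force
      then have "noncentral (h1 ** z t)"
        by (rule noncentral_mult_central_left[OF h1 False z(3) z(5)])
      then show "(g1, h1 ** z t, g2, h2) \<in> Rep_h1_noncentral"
        using Rep_mult_h1_centralizer[OF R z(3,4)] unfolding Rep_h1_noncentral_def by simp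
    qed simp
    then show ?thesis
      using z(2) x by simp
  qed
qed

lemma Rep_h1_noncentral_subset_closure_Rep_h_noncentral: "Rep_h1_noncentral \<subseteq> closure Rep_h_noncentral"
proof
  fix x assume "x \<in> Rep_h1_noncentral"
  then obtain g1 h1 g2 h2 where x: "x = (g1, h1, g2, h2)" and R: "(g1, h1, g2, h2) \<in> Rep"
    and "noncentral h1"
    unfolding Rep_h1_noncentral_def by auto
  then have g2: "g2 \<in> SU2" and h2: "h2 \<in> SU2"
    by (auto simp: Rep_iff)
  show "x \<in> closure Rep_h_noncentral"
  proof (cases "noncentral h2")
    case True
    then have "x \<in> Rep_h_noncentral"
      using R \<open>noncentral h1\<close> unfolding x Rep_h_noncentral_def by simp
    then show ?thesis
      by (rule closure_subset[THEN subsetD])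
  next
    case False
    obtain z :: "real \<Rightarrow> cmat" where z: "continuous_on UNIV z" "z 0 = mat 1" "\<And>t. z t \<in> SU2"
      "\<And>t. z t ** g2 = g2 ** z t" "\<And>t. sin t \<noteq> 0 \<Longrightarrow> noncentral (z t)"
      by (fact centralizer_curve[OF g2])
    have "(\<lambda>t. (g1, h1, g2, h2 ** z t)) 0 \<in> closure Rep_h_noncentral"
    proof (rule in_closure_if_curve)
      show "continuous_on UNIV (\<lambda>t. (g1, h1, g2, h2 ** z t))"
        by (intro continuous_intros z(1))
      fix t :: real assume "0 < t" "t < pi"
      then have "sin t \<noteq> 0"
        using sin_gt_zero by force
      then have "noncentral (h2 ** z t)"
        by (rule noncentral_mult_central_left[OF h2 False z(3) z(5)])
      then show "(g1, h1, g2, h2 ** z t) \<in> Rep_h_noncentral"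
        using Rep_mult_h2_centralizer[OF R z(3,4)] \<open>noncentral h1\<close>
        unfolding Rep_h_noncentral_def by simp
    qed simp
    then show ?thesis
      using z(2) x by simp
  qed
qed

lemma in_closure_Rep_h_noncommuting_if_g1_h1_not_commute:
  assumes R: "(g1, h1, g2, h2) \<in> Rep" and "noncentral h2"
    and h12: "h1 ** h2 = h2 ** h1" and g1h1: "g1 ** h1 \<noteq> h1 ** g1"
  shows "(g1, h1, g2, h2) \<in> closure Rep_h_noncommuting"
proof -
  have g1: "g1 \<in> SU2" and h1: "h1 \<in> SU2" and h2: "h2 \<in> SU2"
    using R by (auto simp: Rep_iff)
  obtain z :: "real \<Rightarrow> cmat" where z: "continuous_on UNIV z" "z 0 = mat 1" "\<And>t. z t \<in> SU2"
    "\<And>t. z t ** g1 = g1 ** z t" "\<And>t. sin t \<noteq> 0 \<Longrightarrow> noncentral (z t)"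
    by (fact centralizer_curve[OF g1])
  have "(\<lambda>t. (g1, h1 ** z t, g2, h2)) 0 \<in> closure Rep_h_noncommuting"
  proof (rule in_closure_if_curve)
    show "continuous_on UNIV (\<lambda>t. (g1, h1 ** z t, g2, h2))"
      by (intro continuous_intros z(1))
    fix t :: real assume "0 < t" "t < pi"
    then have "sin t \<noteq> 0"
      using sin_gt_zero by force
    have "(h1 ** z t) ** h2 \<noteq> h2 ** (h1 ** z t)"
    proof
      assume "(h1 ** z t) ** h2 = h2 ** (h1 ** z t)"
      then have "h1 ** (z t ** h2) = h1 ** (h2 ** z t)"
        using h12 by (metis matrix_mul_assoc)
      then have "adj h1 ** (h1 ** (z t ** h2)) = adj h1 ** (h1 ** (h2 ** z t))"
        by simp
      then have "z t ** h2 = h2 ** z t"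
        using SU2_mult_adj_left[OF h1] by (simp add: matrix_mul_assoc)
      then have "z t ** h1 = h1 ** z t"
        using commute_trans_noncentral[OF h2 z(3) h1 \<open>noncentral h2\<close>] h12 by simp
      then have "g1 ** h1 = h1 ** g1"
        using commute_trans_noncentral[OF z(3) g1 h1 z(5)[OF \<open>sin t \<noteq> 0\<close>]] z(4) by metis
      then show False
        using g1h1 by simp
    qed
    then show "(g1, h1 ** z t, g2, h2) \<in> Rep_h_noncommuting"
      using Rep_mult_h1_centralizer[OF R z(3,4)] unfolding Rep_h_noncommuting_def by simp
  qed simp
  then show ?thesis
    using z(2) by simp
qed

lemma in_closure_Rep_h_noncommuting_if_g1_h1_commute:
  assumes R: "(g1, h1, g2, h2) \<in> Rep" and "noncentral h1" "noncentral h2"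
    and h12: "h1 ** h2 = h2 ** h1" and g1h1: "g1 ** h1 = h1 ** g1"
  shows "(g1, h1, g2, h2) \<in> closure Rep_h_noncommuting"
proof -
  have g1: "g1 \<in> SU2" and h1: "h1 \<in> SU2" and g2: "g2 \<in> SU2" and h2: "h2 \<in> SU2"
    using R by (auto simp: Rep_iff)
  have "commutator g2 h2 = mat 1"
    using R commutator_commuting[OF g1 h1 g1h1] by (simp add: Rep_iff)
  obtain k :: "real \<Rightarrow> cmat" where k: "continuous_on UNIV k" "k 0 = mat 1" "\<And>t. k t \<in> SU2"
    "\<And>t. sin t \<noteq> 0 \<Longrightarrow> cos t \<noteq> 0 \<Longrightarrow>
       (k t ** h1 ** adj (k t)) ** h1 \<noteq> h1 ** (k t ** h1 ** adj (k t))"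
    by (fact conjugation_curve[OF h1 \<open>noncentral h1\<close>])
  have "(\<lambda>t. (k t ** g1 ** adj (k t), k t ** h1 ** adj (k t), g2, h2)) 0
          \<in> closure Rep_h_noncommuting"
  proof (rule in_closure_if_curve)
    show "continuous_on UNIV (\<lambda>t. (k t ** g1 ** adj (k t), k t ** h1 ** adj (k t), g2, h2))"
      by (intro continuous_intros k(1))
    fix t :: real assume "0 < t" "t < pi/2"
    then have "sin t \<noteq> 0" "cos t \<noteq> 0"
      using sin_gt_zero cos_gt_zero_pi by force+
    define a b where "a = k t ** g1 ** adj (k t)" and "b = k t ** h1 ** adj (k t)"
    have ab: "a \<in> SU2" "b \<in> SU2"
      unfolding a_def b_def using k(3) g1 h1 by (auto intro: SU2_mult SU2_adj)
    have "a ** b = b ** a"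
      unfolding a_def b_def using conj_SU2_mult[OF k(3)] g1h1 by metis
    then have "commutator a b = mat 1"
      by (rule commutator_commuting[OF ab])
    moreover have "b ** h2 \<noteq> h2 ** b"
    proof
      assume "b ** h2 = h2 ** b"
      then have "b ** h1 = h1 ** b"
        using commute_trans_noncentral[OF h2 ab(2) h1 \<open>noncentral h2\<close>] h12 by simp
      then show False
        using k(4)[OF \<open>sin t \<noteq> 0\<close> \<open>cos t \<noteq> 0\<close>] unfolding b_def by simp
    qed
    ultimately show "(a, b, g2, h2) \<in> Rep_h_noncommuting"
      using ab g2 h2 \<open>commutator g2 h2 = mat 1\<close> unfolding Rep_h_noncommuting_def by (simp add: Rep_iff)
  qed simp
  then show ?thesis
    using k(2) adj_mat_1 by simp
qed

lemma Rep_h_noncentral_subset_closure_Rep_h_noncommuting: "Rep_h_noncentral \<subseteq> closure Rep_h_noncommuting"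
proof
  fix x assume "x \<in> Rep_h_noncentral"
  then obtain g1 h1 g2 h2 where x: "x = (g1, h1, g2, h2)" and R: "(g1, h1, g2, h2) \<in> Rep"
    and "noncentral h1" "noncentral h2"
    unfolding Rep_h_noncentral_def by auto
  consider "h1 ** h2 \<noteq> h2 ** h1" | "h1 ** h2 = h2 ** h1" "g1 ** h1 \<noteq> h1 ** g1"
    | "h1 ** h2 = h2 ** h1" "g1 ** h1 = h1 ** g1"
    by blast
  then show "x \<in> closure Rep_h_noncommuting"
  proof cases
    case 1
    then have "x \<in> Rep_h_noncommuting"
      using R unfolding x Rep_h_noncommuting_def by simp
    then show ?thesis
      by (rule closure_subset[THEN subsetD])
  next
    case 2
    then show ?thesis
      unfolding x using in_closure_Rep_h_noncommuting_if_g1_h1_not_commute R \<open>noncentral h2\<close> by blast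
  next
    case 3
    then show ?thesis
      unfolding x using in_closure_Rep_h_noncommuting_if_g1_h1_commute R
        \<open>noncentral h1\<close> \<open>noncentral h2\<close> by blast
  qed
qed

lemma Rep_subset_closure_Rep_h_noncommuting: "Rep \<subseteq> closure Rep_h_noncommuting"
proof -
  have "Rep \<subseteq> closure Rep_h1_noncentral"
    by (rule Rep_subset_closure_Rep_h1_noncentral)
  also have "\<dots> \<subseteq> closure Rep_h_noncentral"
    using Rep_h1_noncentral_subset_closure_Rep_h_noncentral closure_minimal by blast
  also have "\<dots> \<subseteq> closure Rep_h_noncommuting"
    using Rep_h_noncentral_subset_closure_Rep_h_noncommuting closure_minimal by blast
  finally show ?thesis .
qed

lemma cls_Rep_h_noncommuting_subset_Mcirc: "cls ` Rep_h_noncommuting \<subseteq> Mcirc"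
proof
  fix C assume "C \<in> cls ` Rep_h_noncommuting"
  then obtain g1 h1 g2 h2 where C: "C = cls (g1, h1, g2, h2)" and R: "(g1, h1, g2, h2) \<in> Rep"
    and "h1 ** h2 \<noteq> h2 ** h1"
    unfolding Rep_h_noncommuting_def by auto
  then have "mu0 (g1, h1, g2, h2) \<in> interior tetra"
    by (intro mu0_in_interior_tetra_if_not_commute) (auto simp: Rep_iff)
  then show "C \<in> Mcirc"
    using R unfolding C Mcirc_def Mset_def by (simp add: mu_cls)
qed

lemma cls_preimage_Mcirc: "{x \<in> Rep. cls x \<in> Mcirc} = Rep \<inter> mu0 -` interior tetra"
  unfolding Mcirc_def Mset_def by (auto simp: mu_cls)

theorem mainTheorem10:
  shows "openin Mtop Mcirc \<and> Mtop closure_of Mcirc = topspace Mtop"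
proof
  have "Mcirc \<subseteq> Mset"
    unfolding Mcirc_def by blast
  moreover have "openin (top_of_set Rep) (Rep \<inter> mu0 -` interior tetra)"
    using continuous_openin_preimage_gen[OF continuous_on_mu0 open_interior] .
  ultimately show "openin Mtop Mcirc"
    unfolding openin_Mtop cls_preimage_Mcirc RepTop_def by blast
  show "Mtop closure_of Mcirc = topspace Mtop"
  proof (rule subset_antisym[OF closure_of_subset_topspace])
    have "Rep_h_noncommuting \<subseteq> Rep"
      unfolding Rep_h_noncommuting_def by auto
    then have "topspace Mtop = Mtop closure_of (cls ` Rep_h_noncommuting)"
      by (rule Mtop_closure_of_cls_dense[symmetric, OF _ Rep_subset_closure_Rep_h_noncommuting])
    also have "\<dots> \<subseteq> Mtop closure_of Mcirc"
      by (rule closure_of_mono[OF cls_Rep_h_noncommuting_subset_Mcirc])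
    finally show "topspace Mtop \<subseteq> Mtop closure_of Mcirc" .
  qed
qed

end
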